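(* Let $a,b\in\mathbb{R}$ with $a,b,a+b+1\notin\mathbb{Z}_-$, and let $\pi_n(x)=\pi_n(x;a,b)$, $n\in\mathbb{N}_0$, be the monic classical Jacobi polynomials. Then for all $m,n\in\mathbb{N}_0$ the function $$\Big(\pi_m(x)\pi_n(x)-\delta_{mn}\frac{\nu(n;a,b)}{\nu(0;a,b)}\Big)(1-x)^a(1+x)^b$$ has a quasi-rational antiderivative belonging to $(1-x)^{a+1}(1+x)^{b+1}\mathcal{Q}_\pm$; i.e. the formal norms of the classical Jacobi polynomials are $\nu_n=\nu(n;a,b)$.
   Context: $\mathbb{Z}_-=\{-1,-2,\ldots\}$; $\mathcal{Q}_\pm$ is the set of rational functions regular at $x=1$ and $x=-1$. $P_n(x;a,b)=2^{-n}\sum_{k=0}^n\binom{n+a}{n-k}\binom{n+b}{k}(x-1)^k(x+1)^{n-k}$ and $\pi_n(x;a,b)=\frac{2^nn!}{(n+a+b+1)_n}P_n(x;a,b)$ (monic), where $(t)_n=t(t+1)\cdots(t+n-1)$. $\nu(z;a,b)=2^{1+a+b+2z}\frac{\Gamma(z+1)\Gamma(a+b+z+1)\Gamma(a+z+1)\Gamma(b+z+1)}{\Gamma(a+b+2z+1)\Gamma(a+b+2z+2)}$, so $\nu(0;a,b)=2^{1+a+b}\Gamma(a+1)\Gamma(b+1)/\Gamma(a+b+2)$. A quasi-rational function is one whose logarithmic derivative is rational; an antiderivative of $f$ is a function $\rho$ with $\rho'=f$. *)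

theory Defs
  imports "HOL-Analysis.Analysis" "HOL-Computational_Algebra.Polynomial"
begin

definition jacobiP :: "nat \<Rightarrow> real \<Rightarrow> real \<Rightarrow> real \<Rightarrow> real" where
  "jacobiP n a b x = (1 / 2 ^ n) * (\<Sum>k\<le>n. ((real n + a) gchoose (n - k)) * ((real n + b) gchoose k)
       * (x - 1) ^ k * (x + 1) ^ (n - k))"

definition jacobi_pi :: "nat \<Rightarrow> real \<Rightarrow> real \<Rightarrow> real \<Rightarrow> real" where
  "jacobi_pi n a b x = (2 ^ n * fact n / pochhammer (real n + a + b + 1) n) * jacobiP n a b x"

text \<open>nu(z;a,b) for z a natural number. At z = 0 we use the closed form stated in the paper
  (this avoids the removable Gamma-pole occurring in the general formula when a+b = -1).\<close>
definition jacobi_nu :: "nat \<Rightarrow> real \<Rightarrow> real \<Rightarrow> real" where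
  "jacobi_nu z a b =
     (if z = 0 then 2 powr (1 + a + b) * Gamma (a + 1) * Gamma (b + 1) / Gamma (a + b + 2)
      else 2 powr (1 + a + b + 2 * real z) *
        (Gamma (real z + 1) * Gamma (a + b + real z + 1) * Gamma (a + real z + 1) * Gamma (b + real z + 1))
        / (Gamma (a + b + 2 * real z + 1) * Gamma (a + b + 2 * real z + 2)))"

definition neg_ints :: "real set" where
  "neg_ints = {- (real k + 1) | k. True}"

end

theory Submission
  imports Defs
begin

(*
  Put w = (1 - x)^a (1 + x)^b and sigma = 1 - x^2. For every polynomial q,
  (w sigma q)' = w L q with L q = sigma q' + (b - a - (a + b + 2) x) q, so it suffices to write
  pi_m pi_n - delta_mn nu_n / nu_0 as L q with q a polynomial (the denominator is then r = 1).

  Differentiation maps pi_(n+1)(a,b) to (n + 1) pi_n(a+1,b+1), and L maps pi_n(a+1,b+1) back to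
  -(n + a + b + 2) pi_(n+1)(a,b); hence L pi_n' = -lambda_n pi_n with lambda_n = n (n + a + b + 1).
  By the product rule L(p q') = sigma p' q' + p L q', so for m /= n the product pi_m pi_n is a
  multiple of L(pi_n pi_m' - pi_m pi_n'), while for P = pi_(n+1)(a,b) the identity
  L(P P') = sigma P'^2 - lambda P^2 reduces P^2 to sigma pi_n(a+1,b+1)^2. As
  L_(a,b)(sigma q) = sigma L_(a+1,b+1) q, induction on n (with shifted parameters) reduces this
  to sigma, which equals nu(0;a+1,b+1)/nu(0;a,b) modulo the range of L. The constants obtained
  obey the recursion that Gamma(z + 1) = z Gamma(z) gives for nu(n;a,b)/nu(0;a,b).
*)

lemma mem_neg_ints_iff: "x \<in> neg_ints \<longleftrightarrow> x + 1 \<in> \<int>\<^sub>\<le>\<^sub>0"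
proof
  assume "x \<in> neg_ints"
  then show "x + 1 \<in> \<int>\<^sub>\<le>\<^sub>0" unfolding neg_ints_def by auto
next
  assume "x + 1 \<in> \<int>\<^sub>\<le>\<^sub>0"
  then obtain n where "x + 1 = - real n" by (elim nonpos_Ints_cases')
  then show "x \<in> neg_ints" unfolding neg_ints_def by (auto intro!: exI[of _ n])
qed

lemma not_neg_ints_add_of_nat: "x \<notin> neg_ints \<Longrightarrow> x + real k \<notin> neg_ints"
  using nonpos_Ints_diff_Nats[of "x + real k + 1" "real k"]
  by (auto simp: mem_neg_ints_iff algebra_simps)

lemma not_neg_ints_imp_nonzero: "x \<notin> neg_ints \<Longrightarrow> x + real k + 1 \<noteq> 0"
  using not_neg_ints_add_of_nat[of x k] by (auto simp: mem_neg_ints_iff)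

lemma not_neg_ints_imp_Gamma_nonzero: "x \<notin> neg_ints \<Longrightarrow> Gamma (x + real k + 1) \<noteq> 0"
  using not_neg_ints_add_of_nat[of x k] by (simp add: mem_neg_ints_iff Gamma_eq_zero_iff)

lemma not_neg_ints_shift:
  assumes "a \<notin> neg_ints" "b \<notin> neg_ints" "a + b + 1 \<notin> neg_ints"
  shows "a + 1 \<notin> neg_ints" "b + 1 \<notin> neg_ints" "(a + 1) + (b + 1) + 1 \<notin> neg_ints"
  using not_neg_ints_add_of_nat[OF assms(1), of 1] not_neg_ints_add_of_nat[OF assms(2), of 1]
    not_neg_ints_add_of_nat[OF assms(3), of 2]
  by (simp_all add: add_ac)


section \<open>The operator L\<close>

definition weighted_pderiv :: "real \<Rightarrow> real \<Rightarrow> real poly \<Rightarrow> real poly" where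
  "weighted_pderiv a b q = [:1, 0, -1:] * pderiv q + [:b - a, - (a + b + 2):] * q"

lemma weighted_pderiv_0 [simp]: "weighted_pderiv a b 0 = 0"
  by (simp add: weighted_pderiv_def)

lemma weighted_pderiv_add:
  "weighted_pderiv a b (p + q) = weighted_pderiv a b p + weighted_pderiv a b q"
  by (rule poly_ext) (simp add: weighted_pderiv_def pderiv_add algebra_simps)

lemma weighted_pderiv_diff:
  "weighted_pderiv a b (p - q) = weighted_pderiv a b p - weighted_pderiv a b q"
  by (rule poly_ext) (simp add: weighted_pderiv_def pderiv_diff algebra_simps)

lemma weighted_pderiv_smult: "weighted_pderiv a b (smult c p) = smult c (weighted_pderiv a b p)"
  by (rule poly_ext) (simp add: weighted_pderiv_def pderiv_smult algebra_simps)

lemma weighted_pderiv_sum: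
  "weighted_pderiv a b (\<Sum>k\<in>A. f k) = (\<Sum>k\<in>A. weighted_pderiv a b (f k))"
  by (induction A rule: infinite_finite_induct) (simp_all add: weighted_pderiv_add)

lemma weighted_pderiv_mult:
  "weighted_pderiv a b (p * q) = [:1, 0, -1:] * pderiv p * q + p * weighted_pderiv a b q"
  by (simp add: weighted_pderiv_def pderiv_mult algebra_simps)

lemma weighted_pderiv_sigma_mult:
  "weighted_pderiv a b ([:1, 0, -1:] * q) = [:1, 0, -1:] * weighted_pderiv (a + 1) (b + 1) q"
  unfolding weighted_pderiv_def pderiv_mult
  by (rule poly_ext) (simp add: pderiv_pCons algebra_simps)

lemma has_real_derivative_weighted_pderiv:
  assumes "-1 < x" "x < 1"
  shows "((\<lambda>t. (1 - t) powr (a + 1) * (1 + t) powr (b + 1) * poly q t) has_real_derivative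
           poly (weighted_pderiv a b q) x * (1 - x) powr a * (1 + x) powr b) (at x)"
proof -
  have "1 - x > 0" "1 + x > 0" using assms by auto
  then have split_a: "(1 - x) powr (a + 1) = (1 - x) * (1 - x) powr a"
    and split_b: "(1 + x) powr (b + 1) = (1 + x) * (1 + x) powr b"
    by (simp_all add: powr_add)
  have "((\<lambda>t. (1 - t) powr (a + 1) * (1 + t) powr (b + 1) * poly q t) has_real_derivative
      - (a + 1) * (1 - x) powr a * (1 + x) powr (b + 1) * poly q x
      + (b + 1) * (1 - x) powr (a + 1) * (1 + x) powr b * poly q x
      + (1 - x) powr (a + 1) * (1 + x) powr (b + 1) * poly (pderiv q) x) (at x)"
    using \<open>1 - x > 0\<close> \<open>1 + x > 0\<close>
    by (auto intro!: derivative_eq_intros poly_DERIV simp: algebra_simps)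
  also have "- (a + 1) * (1 - x) powr a * (1 + x) powr (b + 1) * poly q x
      + (b + 1) * (1 - x) powr (a + 1) * (1 + x) powr b * poly q x
      + (1 - x) powr (a + 1) * (1 + x) powr (b + 1) * poly (pderiv q) x
      = poly (weighted_pderiv a b q) x * (1 - x) powr a * (1 + x) powr b"
    unfolding split_a split_b by (simp add: weighted_pderiv_def algebra_simps)
  finally show ?thesis .
qed

lemma product_in_range_weighted_pderiv:
  assumes "weighted_pderiv a b (pderiv p) = smult (- l) p"
    and "weighted_pderiv a b (pderiv q) = smult (- l') q" and "l \<noteq> l'"
  shows "p * q \<in> range (weighted_pderiv a b)"
proof -
  have "weighted_pderiv a b (q * pderiv p - p * pderiv q) = smult (l' - l) (p * q)"
    unfolding weighted_pderiv_diff weighted_pderiv_mult assms(1,2)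
    by (rule poly_ext) (simp add: algebra_simps)
  then have "weighted_pderiv a b (smult (1 / (l' - l)) (q * pderiv p - p * pderiv q)) = p * q"
    using assms(3) by (simp add: weighted_pderiv_smult)
  then show ?thesis by (metis rangeI)
qed


section \<open>Expansions in powers of x - 1 and x + 1\<close>

lemma pderiv_sum: "pderiv (\<Sum>k\<in>A. f k) = (\<Sum>k\<in>A. pderiv (f k))"
  using higher_pderiv_sum[of 1] by simp

definition endpoint_monomial :: "nat \<Rightarrow> nat \<Rightarrow> real poly" where
  "endpoint_monomial k j = [:-1, 1:] ^ k * [:1, 1:] ^ j"

lemma poly_endpoint_monomial [simp]:
  "poly (endpoint_monomial k j) x = (x - 1) ^ k * (x + 1) ^ j"
  by (simp add: endpoint_monomial_def algebra_simps)

lemma pderiv_endpoint_monomial: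
  "pderiv (endpoint_monomial k j) =
     smult (real k) (endpoint_monomial (k - 1) j) + smult (real j) (endpoint_monomial k (j - 1))"
  by (simp add: endpoint_monomial_def pderiv_mult pderiv_power pderiv_pCons algebra_simps)

lemma weighted_pderiv_endpoint_monomial:
  "weighted_pderiv a b (endpoint_monomial k j) =
     smult (- (real k + a + 1)) (endpoint_monomial k (Suc j))
     + smult (- (real j + b + 1)) (endpoint_monomial (Suc k) j)"
  by (rule poly_ext, cases k; cases j)
    (simp_all add: weighted_pderiv_def pderiv_endpoint_monomial algebra_simps)

definition endpoint_expansion :: "nat \<Rightarrow> (nat \<Rightarrow> real) \<Rightarrow> real poly" where
  "endpoint_expansion n c = (\<Sum>k\<le>n. smult (c k) (endpoint_monomial k (n - k)))"

lemma endpoint_expansion_cong: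
  "(\<And>k. k \<le> n \<Longrightarrow> c k = d k) \<Longrightarrow> endpoint_expansion n c = endpoint_expansion n d"
  unfolding endpoint_expansion_def by (auto intro!: sum.cong)

lemma smult_endpoint_expansion:
  "smult s (endpoint_expansion n c) = endpoint_expansion n (\<lambda>k. s * c k)"
proof -
  have "smult s (\<Sum>k\<in>A. f k) = (\<Sum>k\<in>A. smult s (f k))" for f :: "nat \<Rightarrow> real poly" and A
    by (induction A rule: infinite_finite_induct) (simp_all add: smult_add_right)
  then show ?thesis by (simp add: endpoint_expansion_def)
qed

lemma pderiv_endpoint_expansion:
  "pderiv (endpoint_expansion (Suc m) c) =
     endpoint_expansion m (\<lambda>k. real (Suc k) * c (Suc k) + real (Suc m - k) * c k)"
proof -
  have "pderiv (endpoint_expansion (Suc m) c) =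
      (\<Sum>k\<le>Suc m. smult (real k * c k) (endpoint_monomial (k - 1) (Suc m - k)))
      + (\<Sum>k\<le>Suc m. smult (real (Suc m - k) * c k) (endpoint_monomial k (m - k)))"
    unfolding endpoint_expansion_def pderiv_sum pderiv_smult pderiv_endpoint_monomial
    by (simp add: smult_add_right sum.distrib mult.commute)
  also have "(\<Sum>k\<le>Suc m. smult (real k * c k) (endpoint_monomial (k - 1) (Suc m - k)))
      = (\<Sum>k\<le>m. smult (real (Suc k) * c (Suc k)) (endpoint_monomial k (m - k)))"
    by (subst sum.atMost_Suc_shift) simp
  also have "(\<Sum>k\<le>Suc m. smult (real (Suc m - k) * c k) (endpoint_monomial k (m - k)))
      = (\<Sum>k\<le>m. smult (real (Suc m - k) * c k) (endpoint_monomial k (m - k)))"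
    by simp
  finally show ?thesis
    by (simp add: endpoint_expansion_def sum.distrib[symmetric] smult_add_left)
qed

lemma weighted_pderiv_endpoint_expansion:
  "weighted_pderiv a b (endpoint_expansion m c) =
     endpoint_expansion (Suc m) (\<lambda>k. (if k \<le> m then - (real k + a + 1) * c k else 0)
       + (if k = 0 then 0 else - (real (Suc m - k) + b + 1) * c (k - 1)))"
proof -
  have "weighted_pderiv a b (endpoint_expansion m c) =
      (\<Sum>k\<le>m. smult (- (real k + a + 1) * c k) (endpoint_monomial k (Suc m - k)))
      + (\<Sum>k\<le>m. smult (- (real (Suc m - Suc k) + b + 1) * c k)
                   (endpoint_monomial (Suc k) (Suc m - Suc k)))"
    by (simp add: endpoint_expansion_def weighted_pderiv_sum weighted_pderiv_smult
        weighted_pderiv_endpoint_monomial smult_add_right sum.distrib Suc_diff_le mult.commute)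
  also have "(\<Sum>k\<le>m. smult (- (real k + a + 1) * c k) (endpoint_monomial k (Suc m - k)))
      = (\<Sum>k\<le>Suc m. smult (if k \<le> m then - (real k + a + 1) * c k else 0)
                       (endpoint_monomial k (Suc m - k)))"
    by simp
  also have "(\<Sum>k\<le>m. smult (- (real (Suc m - Suc k) + b + 1) * c k)
                       (endpoint_monomial (Suc k) (Suc m - Suc k)))
      = (\<Sum>k\<le>Suc m. smult (if k = 0 then 0 else - (real (Suc m - k) + b + 1) * c (k - 1))
                       (endpoint_monomial k (Suc m - k)))"
    by (subst sum.atMost_Suc_shift) simp
  finally show ?thesis
    by (simp add: endpoint_expansion_def sum.distrib[symmetric] smult_add_left)
qed


section \<open>Jacobi polynomials\<close>

lemma gbinomial_absorb_comp_Suc: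
  "((x :: 'a :: field_char_0) - of_nat k) * (x gchoose k) = of_nat (Suc k) * (x gchoose Suc k)"
  using gbinomial_absorb_comp[of x k] gbinomial_absorption[of k x] by simp

definition jacobi_coeff :: "nat \<Rightarrow> real \<Rightarrow> real \<Rightarrow> nat \<Rightarrow> real" where
  "jacobi_coeff n a b k = ((real n + a) gchoose (n - k)) * ((real n + b) gchoose k)"

lemma jacobi_coeff_pderiv:
  assumes "k \<le> m"
  shows "real (Suc k) * jacobi_coeff (Suc m) a b (Suc k) + real (Suc m - k) * jacobi_coeff (Suc m) a b k
    = (real m + a + b + 2) * jacobi_coeff m (a + 1) (b + 1) k"
proof -
  define A M where "A = real m + 1 + a" and "M = real m + 1 + b"
  have "Suc m - k = Suc (m - k)" using assms by simp
  have absorb_M: "real (Suc k) * (M gchoose Suc k) = (M - real k) * (M gchoose k)"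
    and absorb_A: "real (Suc (m - k)) * (A gchoose Suc (m - k))
                     = (A - real (m - k)) * (A gchoose (m - k))"
    using gbinomial_absorb_comp_Suc[of M k] gbinomial_absorb_comp_Suc[of A "m - k"] by simp_all
  have "real (Suc k) * jacobi_coeff (Suc m) a b (Suc k) + real (Suc m - k) * jacobi_coeff (Suc m) a b k
      = (A gchoose (m - k)) * (real (Suc k) * (M gchoose Suc k))
        + (real (Suc (m - k)) * (A gchoose Suc (m - k))) * (M gchoose k)"
    unfolding jacobi_coeff_def A_def M_def \<open>Suc m - k = Suc (m - k)\<close> by (simp add: add_ac)
  also have "\<dots> = (A gchoose (m - k)) * (M gchoose k) * ((M - real k) + (A - real (m - k)))"
    unfolding absorb_M absorb_A by (simp add: algebra_simps)
  also have "\<dots> = (real m + a + b + 2) * jacobi_coeff m (a + 1) (b + 1) k"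
    using assms by (simp add: jacobi_coeff_def A_def M_def of_nat_diff algebra_simps)
  finally show ?thesis .
qed

lemma jacobi_coeff_weighted_pderiv:
  assumes "k \<le> Suc m"
  shows "(if k \<le> m then - (real k + a + 1) * jacobi_coeff m (a + 1) (b + 1) k else 0)
       + (if k = 0 then 0 else - (real (Suc m - k) + b + 1) * jacobi_coeff m (a + 1) (b + 1) (k - 1))
     = - (real m + 1) * jacobi_coeff (Suc m) a b k"
proof -
  define A M where "A = real m + 1 + a" and "M = real m + 1 + b"
  have coeff_shift: "jacobi_coeff m (a + 1) (b + 1) i = (A gchoose (m - i)) * (M gchoose i)" for i
    by (simp add: jacobi_coeff_def A_def M_def add_ac)
  have coeff_Suc: "jacobi_coeff (Suc m) a b i = (A gchoose (Suc m - i)) * (M gchoose i)" for i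
    by (simp add: jacobi_coeff_def A_def M_def add_ac)
  consider "k = 0" | "k = Suc m" | i where "k = Suc i" "i < m"
    using assms by (cases k) (auto simp: le_less)
  then show ?thesis
  proof cases
    case 1
    have "(a + 1) * (A gchoose m) = real (Suc m) * (A gchoose Suc m)"
      using gbinomial_absorb_comp_Suc[of A m] by (simp add: A_def add_ac)
    then show ?thesis unfolding 1 coeff_shift coeff_Suc by (simp add: algebra_simps)
  next
    case 2
    have "(b + 1) * (M gchoose m) = real (Suc m) * (M gchoose Suc m)"
      using gbinomial_absorb_comp_Suc[of M m] by (simp add: M_def add_ac)
    then show ?thesis unfolding 2 coeff_shift coeff_Suc by (simp add: algebra_simps)
  next
    case 3
    have "A - real (m - Suc i) = real (Suc i) + a + 1" "Suc (m - Suc i) = m - i"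
      using 3 by (simp_all add: A_def of_nat_diff)
    then have absorb_A: "(real (Suc i) + a + 1) * (A gchoose (m - Suc i))
                           = real (m - i) * (A gchoose (m - i))"
      using gbinomial_absorb_comp_Suc[of A "m - Suc i"] by (simp only:)
    have "M - real i = real (m - i) + b + 1"
      using 3 by (simp add: M_def of_nat_diff)
    then have absorb_M: "(real (m - i) + b + 1) * (M gchoose i) = real (Suc i) * (M gchoose Suc i)"
      using gbinomial_absorb_comp_Suc[of M i] by (simp only:)
    have "- (real (Suc i) + a + 1) * ((A gchoose (m - Suc i)) * (M gchoose Suc i))
        - (real (m - i) + b + 1) * ((A gchoose (m - i)) * (M gchoose i))
        = - (real (m - i) + real (Suc i)) * ((A gchoose (m - i)) * (M gchoose Suc i))"
      using absorb_A absorb_M by algebra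
    then show ?thesis
      using 3 unfolding coeff_shift coeff_Suc by (simp add: of_nat_diff algebra_simps)
  qed
qed

definition jacobi_monic_factor :: "nat \<Rightarrow> real \<Rightarrow> real \<Rightarrow> real" where
  "jacobi_monic_factor n a b = fact n / pochhammer (real n + a + b + 1) n"

definition jacobi_poly :: "nat \<Rightarrow> real \<Rightarrow> real \<Rightarrow> real poly" where
  "jacobi_poly n a b = smult (jacobi_monic_factor n a b) (endpoint_expansion n (jacobi_coeff n a b))"

lemma poly_jacobi_poly: "poly (jacobi_poly n a b) x = jacobi_pi n a b x"
  by (simp add: jacobi_poly_def jacobi_monic_factor_def endpoint_expansion_def jacobi_pi_def
      jacobiP_def jacobi_coeff_def poly_sum sum_distrib_left algebra_simps)

lemma jacobi_poly_0 [simp]: "jacobi_poly 0 a b = 1"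
  by (simp add: jacobi_poly_def jacobi_monic_factor_def endpoint_expansion_def
      endpoint_monomial_def jacobi_coeff_def)

lemma pderiv_jacobi_expansion:
  "pderiv (endpoint_expansion (Suc m) (jacobi_coeff (Suc m) a b)) =
     smult (real m + a + b + 2) (endpoint_expansion m (jacobi_coeff m (a + 1) (b + 1)))"
  unfolding pderiv_endpoint_expansion smult_endpoint_expansion
  by (rule endpoint_expansion_cong) (rule jacobi_coeff_pderiv)

lemma weighted_pderiv_jacobi_expansion:
  "weighted_pderiv a b (endpoint_expansion m (jacobi_coeff m (a + 1) (b + 1))) =
     smult (- (real m + 1)) (endpoint_expansion (Suc m) (jacobi_coeff (Suc m) a b))"
  unfolding weighted_pderiv_endpoint_expansion smult_endpoint_expansion
  by (rule endpoint_expansion_cong) (rule jacobi_coeff_weighted_pderiv)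

lemma jacobi_monic_factor_Suc:
  assumes "real m + a + b + 2 \<noteq> 0"
  shows "(real m + a + b + 2) * jacobi_monic_factor (Suc m) a b
    = (real m + 1) * jacobi_monic_factor m (a + 1) (b + 1)"
proof -
  define P where "P = pochhammer (real m + (a + 1) + (b + 1) + 1) m"
  have "pochhammer (real (Suc m) + a + b + 1) (Suc m) = (real m + a + b + 2) * P"
    by (simp add: P_def pochhammer_rec add_ac)
  then show ?thesis
    unfolding jacobi_monic_factor_def P_def[symmetric] using assms
    by (cases "P = 0") (simp_all add: fact_Suc)
qed

lemma pderiv_jacobi_poly:
  assumes "real m + a + b + 2 \<noteq> 0"
  shows "pderiv (jacobi_poly (Suc m) a b) = smult (real m + 1) (jacobi_poly m (a + 1) (b + 1))"
  using jacobi_monic_factor_Suc[OF assms]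
  by (simp add: jacobi_poly_def pderiv_smult pderiv_jacobi_expansion algebra_simps)

lemma weighted_pderiv_jacobi_poly:
  assumes "real m + a + b + 2 \<noteq> 0"
  shows "weighted_pderiv a b (jacobi_poly m (a + 1) (b + 1)) =
    smult (- (real m + a + b + 2)) (jacobi_poly (Suc m) a b)"
proof -
  have "jacobi_monic_factor m (a + 1) (b + 1) * - (real m + 1)
      = - (real m + a + b + 2) * jacobi_monic_factor (Suc m) a b"
    using jacobi_monic_factor_Suc[OF assms] by (metis mult.commute mult_minus_left mult_minus_right)
  then show ?thesis
    unfolding jacobi_poly_def weighted_pderiv_smult weighted_pderiv_jacobi_expansion smult_smult
    by simp
qed

lemma weighted_pderiv_pderiv_jacobi_poly:
  assumes "a + b + 1 \<notin> neg_ints"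
  shows "weighted_pderiv a b (pderiv (jacobi_poly n a b)) =
    smult (- (real n * (real n + a + b + 1))) (jacobi_poly n a b)"
proof (cases n)
  case (Suc m)
  have c: "real m + a + b + 2 \<noteq> 0"
    using not_neg_ints_imp_nonzero[OF assms, of m] by (simp add: add_ac)
  show ?thesis
    unfolding Suc pderiv_jacobi_poly[OF c] weighted_pderiv_smult weighted_pderiv_jacobi_poly[OF c]
      smult_smult
    by (simp add: algebra_simps)
qed simp

lemma jacobi_eigenvalue_inj:
  assumes "a + b + 1 \<notin> neg_ints" and "m \<noteq> n"
  shows "real m * (real m + a + b + 1) \<noteq> real n * (real n + a + b + 1)"
proof
  assume "real m * (real m + a + b + 1) = real n * (real n + a + b + 1)"
  then have "(real m - real n) * (real m + real n + a + b + 1) = 0"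
    by (simp add: algebra_simps)
  with assms(2) have "a + b + 1 = - (real (m + n - 1) + 1)"
    by (simp add: of_nat_diff)
  with assms(1) show False
    unfolding neg_ints_def by blast
qed

lemma jacobi_poly_formally_orthogonal:
  assumes "a + b + 1 \<notin> neg_ints" and "m \<noteq> n"
  shows "jacobi_poly m a b * jacobi_poly n a b \<in> range (weighted_pderiv a b)"
  using product_in_range_weighted_pderiv weighted_pderiv_pderiv_jacobi_poly[OF assms(1)]
    jacobi_eigenvalue_inj[OF assms] by blast


section \<open>Formal norms\<close>

definition sigma_mean :: "real \<Rightarrow> real \<Rightarrow> real" where
  "sigma_mean a b = 4 * (a + 1) * (b + 1) / ((a + b + 2) * (a + b + 3))"

lemma sigma_minus_mean:
  assumes "a + b + 2 \<noteq> 0" and "a + b + 3 \<noteq> 0"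
  shows "[:1, 0, -1:] - [:sigma_mean a b:] =
    weighted_pderiv a b [:(b - a) / ((a + b + 2) * (a + b + 3)), 1 / (a + b + 3):]"
proof (rule poly_ext)
  fix x
  have "a + (b + 2) \<noteq> 0" "a + (b + 3) \<noteq> 0" using assms by (simp_all add: add_ac)
  then show "poly ([:1, 0, -1:] - [:sigma_mean a b:]) x =
    poly (weighted_pderiv a b [:(b - a) / ((a + b + 2) * (a + b + 3)), 1 / (a + b + 3):]) x"
    by (simp add: weighted_pderiv_def sigma_mean_def pderiv_pCons divide_simps)
      (simp add: algebra_simps)
qed

lemma jacobi_nu_eq_Gamma:
  assumes "z \<noteq> 0 \<or> a + b + 1 \<notin> \<int>\<^sub>\<le>\<^sub>0"
  shows "jacobi_nu z a b = 2 powr (1 + a + b + 2 * real z) *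
    (Gamma (real z + 1) * Gamma (a + b + real z + 1) * Gamma (a + real z + 1) * Gamma (b + real z + 1))
    / (Gamma (a + b + 2 * real z + 1) * Gamma (a + b + 2 * real z + 2))"
  using assms by (auto simp: jacobi_nu_def Gamma_eq_zero_iff add_ac)

lemma jacobi_nu_Suc:
  assumes "a + b + 1 \<notin> neg_ints"
  shows "(real m + a + b + 2) * jacobi_nu (Suc m) a b = (real m + 1) * jacobi_nu m (a + 1) (b + 1)"
proof -
  define s where "s = a + b + real m + 2"
  have s_pos: "s \<notin> \<int>\<^sub>\<le>\<^sub>0"
    using not_neg_ints_add_of_nat[OF assms, of m] by (simp add: s_def mem_neg_ints_iff add_ac)
  have "(a + 1) + (b + 1) + 1 \<notin> \<int>\<^sub>\<le>\<^sub>0"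
    using not_neg_ints_add_of_nat[OF assms, of 1] by (simp add: mem_neg_ints_iff add_ac)
  then have "jacobi_nu m (a + 1) (b + 1) = 2 powr (1 + a + b + 2 * real (Suc m)) *
      (Gamma (real m + 1) * Gamma (s + 1) * Gamma (a + real (Suc m) + 1) * Gamma (b + real (Suc m) + 1))
      / (Gamma (a + b + 2 * real (Suc m) + 1) * Gamma (a + b + 2 * real (Suc m) + 2))"
    by (simp add: jacobi_nu_eq_Gamma s_def add_ac)
  moreover have "jacobi_nu (Suc m) a b = 2 powr (1 + a + b + 2 * real (Suc m)) *
      (Gamma (real m + 1 + 1) * Gamma s * Gamma (a + real (Suc m) + 1) * Gamma (b + real (Suc m) + 1))
      / (Gamma (a + b + 2 * real (Suc m) + 1) * Gamma (a + b + 2 * real (Suc m) + 2))"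
    by (simp add: jacobi_nu_eq_Gamma s_def add_ac)
  moreover have "Gamma (real m + 1 + 1) = (real m + 1) * Gamma (real m + 1)"
    using Gamma_plus1[of "real m + 1"] of_nat_in_nonpos_Ints_iff[of "Suc m"] by (simp add: add.commute)
  ultimately show ?thesis
    by (simp add: Gamma_plus1[OF s_pos]) (simp add: s_def add_ac)
qed

lemma jacobi_nu_0_nonzero:
  assumes "a \<notin> neg_ints" "b \<notin> neg_ints" "a + b + 1 \<notin> neg_ints"
  shows "jacobi_nu 0 a b \<noteq> 0"
proof -
  have "Gamma (a + 1) \<noteq> 0" "Gamma (b + 1) \<noteq> 0" "Gamma (a + b + 2) \<noteq> 0"
    using not_neg_ints_imp_Gamma_nonzero[of _ 0] assms by (force simp: add_ac)+
  then show ?thesis by (simp add: jacobi_nu_def)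
qed

lemma jacobi_nu_0_shift:
  assumes "a \<notin> neg_ints" "b \<notin> neg_ints" "a + b + 1 \<notin> neg_ints"
  shows "jacobi_nu 0 (a + 1) (b + 1) = sigma_mean a b * jacobi_nu 0 a b"
proof -
  have "a + 1 \<notin> \<int>\<^sub>\<le>\<^sub>0" "b + 1 \<notin> \<int>\<^sub>\<le>\<^sub>0" "a + b + 2 \<notin> \<int>\<^sub>\<le>\<^sub>0" "a + b + 3 \<notin> \<int>\<^sub>\<le>\<^sub>0"
    using assms not_neg_ints_add_of_nat[OF assms(3), of 1]
    by (simp_all add: mem_neg_ints_iff add_ac)
  then have "Gamma (a + 2) = (a + 1) * Gamma (a + 1)" "Gamma (b + 2) = (b + 1) * Gamma (b + 1)"
      "Gamma (a + b + 4) = (a + b + 3) * (a + b + 2) * Gamma (a + b + 2)"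
    using Gamma_plus1[of "a + 1"] Gamma_plus1[of "b + 1"] Gamma_plus1[of "a + b + 2"]
      Gamma_plus1[of "a + b + 3"] by (simp_all add: add_ac)
  moreover have "(2::real) powr (3 + a + b) = 4 * 2 powr (1 + a + b)"
    using powr_add[of 2 2 "1 + a + b"] by (simp add: add_ac)
  ultimately show ?thesis
    using \<open>a + b + 2 \<notin> \<int>\<^sub>\<le>\<^sub>0\<close> \<open>a + b + 3 \<notin> \<int>\<^sub>\<le>\<^sub>0\<close>
    by (simp add: jacobi_nu_def sigma_mean_def Gamma_eq_zero_iff field_simps)
qed

lemma jacobi_nu_ratio_Suc:
  assumes "a \<notin> neg_ints" "b \<notin> neg_ints" "a + b + 1 \<notin> neg_ints"
  shows "jacobi_nu (Suc m) a b / jacobi_nu 0 a b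
    = (real m + 1) * sigma_mean a b / (real m + a + b + 2)
      * (jacobi_nu m (a + 1) (b + 1) / jacobi_nu 0 (a + 1) (b + 1))"
proof -
  have "real m + a + b + 2 \<noteq> 0"
    using not_neg_ints_imp_nonzero[OF assms(3), of m] by (simp add: add_ac)
  then have Suc: "jacobi_nu (Suc m) a b
      = (real m + 1) / (real m + a + b + 2) * jacobi_nu m (a + 1) (b + 1)"
    using jacobi_nu_Suc[OF assms(3), of m] by (simp add: field_simps)
  have "sigma_mean a b \<noteq> 0"
    using jacobi_nu_0_nonzero[OF not_neg_ints_shift[OF assms]] jacobi_nu_0_shift[OF assms] by simp
  then show ?thesis
    using jacobi_nu_0_nonzero[OF assms] by (simp add: Suc jacobi_nu_0_shift[OF assms])
qed

lemma jacobi_poly_formal_norm: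
  assumes "a \<notin> neg_ints" "b \<notin> neg_ints" "a + b + 1 \<notin> neg_ints"
  shows "jacobi_poly n a b * jacobi_poly n a b - [:jacobi_nu n a b / jacobi_nu 0 a b:]
    \<in> range (weighted_pderiv a b)"
  using assms
proof (induction n arbitrary: a b)
  case 0
  then have "jacobi_poly 0 a b * jacobi_poly 0 a b - [:jacobi_nu 0 a b / jacobi_nu 0 a b:]
      = weighted_pderiv a b 0"
    using jacobi_nu_0_nonzero by (simp add: pCons_one)
  then show ?case by (metis rangeI)
next
  case (Suc m)
  define P Q \<sigma> where "P = jacobi_poly (Suc m) a b" and "Q = jacobi_poly m (a + 1) (b + 1)"
    and "\<sigma> = [:1, 0, -1 :: real:]"
  define R where "R = jacobi_nu m (a + 1) (b + 1) / jacobi_nu 0 (a + 1) (b + 1)"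
  define l where "l = (real m + 1) * (real m + a + b + 2)"
  have "real m + a + b + 2 \<noteq> 0" "a + b + 2 \<noteq> 0" "a + b + 3 \<noteq> 0"
    using not_neg_ints_imp_nonzero[OF Suc.prems(3), of m]
      not_neg_ints_imp_nonzero[OF Suc.prems(3), of 0] not_neg_ints_imp_nonzero[OF Suc.prems(3), of 1]
    by (simp_all add: add_ac)
  then have "l \<noteq> 0" by (simp add: l_def)
  obtain q1 where q1: "Q * Q - [:R:] = weighted_pderiv (a + 1) (b + 1) q1"
    using Suc.IH[OF not_neg_ints_shift[OF Suc.prems]] unfolding Q_def R_def by blast
  obtain q2 where q2: "\<sigma> - [:sigma_mean a b:] = weighted_pderiv a b q2"
    using sigma_minus_mean[OF \<open>a + b + 2 \<noteq> 0\<close> \<open>a + b + 3 \<noteq> 0\<close>] unfolding \<sigma>_def by blast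
  have dP: "pderiv P = smult (real m + 1) Q"
    unfolding P_def Q_def by (rule pderiv_jacobi_poly) fact
  have LdP: "weighted_pderiv a b (pderiv P) = smult (- l) P"
    using weighted_pderiv_pderiv_jacobi_poly[OF Suc.prems(3), of "Suc m"]
    by (simp add: P_def l_def algebra_simps)
  \<comment> \<open>l P^2 = sigma P'^2 - L(P P'), and modulo the range sigma Q^2 is R sigma (induction
     hypothesis) and R sigma is R * sigma_mean a b\<close>
  define X where "X = smult ((real m + 1)\<^sup>2) (\<sigma> * q1 + smult R q2) - P * pderiv P"
  have "weighted_pderiv a b X = smult ((real m + 1)\<^sup>2) (\<sigma> * (Q * Q - [:R:])
      + smult R (\<sigma> - [:sigma_mean a b:])) - (\<sigma> * pderiv P * pderiv P + P * smult (- l) P)"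
    unfolding X_def weighted_pderiv_diff weighted_pderiv_smult weighted_pderiv_add
      weighted_pderiv_sigma_mult[folded \<sigma>_def]
    unfolding weighted_pderiv_mult[folded \<sigma>_def] q1 q2 LdP ..
  also have "\<dots> = smult l (P * P) - [:(real m + 1)\<^sup>2 * R * sigma_mean a b:]"
    unfolding dP l_def by (rule poly_ext) (simp add: \<sigma>_def algebra_simps power2_eq_square)
  finally have LX: "weighted_pderiv a b X
      = smult l (P * P) - [:(real m + 1)\<^sup>2 * R * sigma_mean a b:]" .
  have "P * P - [:(real m + 1)\<^sup>2 * R * sigma_mean a b / l:] = weighted_pderiv a b (smult (1 / l) X)"
    unfolding weighted_pderiv_smult LX using \<open>l \<noteq> 0\<close> by (intro poly_ext) (simp add: field_simps)
  moreover have "jacobi_nu (Suc m) a b / jacobi_nu 0 a b = (real m + 1)\<^sup>2 * R * sigma_mean a b / l"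
    using jacobi_nu_ratio_Suc[OF Suc.prems, of m] \<open>real m + a + b + 2 \<noteq> 0\<close>
    unfolding R_def[symmetric] l_def by (simp add: power2_eq_square)
  ultimately show ?case unfolding P_def by (metis rangeI)
qed

theorem mainTheorem13:
  fixes a b :: real and m n :: nat
  assumes "a \<notin> neg_ints" and "b \<notin> neg_ints" and "a + b + 1 \<notin> neg_ints"
  shows "\<exists>p r :: real poly.
           poly r 1 \<noteq> 0 \<and> poly r (-1) \<noteq> 0 \<and>
           (\<forall>x \<in> {-1<..<1}. poly r x \<noteq> 0 \<and>
              ((\<lambda>t. (1 - t) powr (a + 1) * (1 + t) powr (b + 1) * (poly p t / poly r t))
                 has_real_derivative
                 ((jacobi_pi m a b x * jacobi_pi n a b x
                    - (if m = n then jacobi_nu n a b / jacobi_nu 0 a b else 0))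
                  * (1 - x) powr a * (1 + x) powr b)) (at x))"
proof -
  define c where "c = (if m = n then jacobi_nu n a b / jacobi_nu 0 a b else 0)"
  have "jacobi_poly m a b * jacobi_poly n a b - [:c:] \<in> range (weighted_pderiv a b)"
    using jacobi_poly_formal_norm[OF assms] jacobi_poly_formally_orthogonal[OF assms(3)]
    by (cases "m = n") (simp_all add: c_def)
  then obtain q where q: "jacobi_poly m a b * jacobi_poly n a b - [:c:] = weighted_pderiv a b q"
    by blast
  have "((\<lambda>t. (1 - t) powr (a + 1) * (1 + t) powr (b + 1) * (poly q t / poly 1 t))
      has_real_derivative (jacobi_pi m a b x * jacobi_pi n a b x - c) * (1 - x) powr a * (1 + x) powr b)
      (at x)" if "x \<in> {-1<..<1}" for x
    using has_real_derivative_weighted_pderiv[of x a b q] that arg_cong[OF q, of "\<lambda>p. poly p x"]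
    by (simp add: poly_jacobi_poly)
  then show ?thesis
    unfolding c_def by (intro exI[of _ q] exI[of _ 1]) simp
qed

end
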